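(* Let $\Sigma$ be an alphabet and $n\ge 1$ a natural number. There exist $n$ nondeterministic finite automata $A_1,\dots,A_n$, each with six states, such that $P\big(L_m(A_1\|A_2\|\cdots\|A_n)\big)=\Sigma^{2^n-1}$. Here $P$ is the projection from the overall alphabet of $A_1\|\cdots\|A_n$ to $\Sigma$.
   Context: A nondeterministic finite automaton is $A=(Q,\Sigma,\delta,I,F)$ with transition function $\delta\colon Q\times\Sigma\to 2^Q$, nonempty set of initial states $I$, and set of marked states $F$. Its recognized (marked) language is $L_m(A)=\{w\mid \delta(I,w)\cap F\neq\emptyset\}$. The parallel composition $A_1\|\cdots\|A_n$ is the synchronous product, defined as follows. Its alphabet is the union of the alphabets, and its states are tuples of states. On an event, all components whose alphabet contains that event move simultaneously; the other components stay unchanged. The initial states are the tuples of initial states, and the marked states are the tuples of marked states. The projection $P$ onto $\Sigma$ is the morphism that erases events not in $\Sigma$ and keeps events in $\Sigma$. *)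

theory Defs
  imports Main
begin

record ('s, 'e) nfa =
  states :: "'s set"
  alph   :: "'e set"
  delta  :: "'s \<Rightarrow> 'e \<Rightarrow> 's set"
  init   :: "'s set"
  marked :: "'s set"

definition wf_nfa :: "('s, 'e) nfa \<Rightarrow> bool" where
  "wf_nfa A \<longleftrightarrow> finite (states A) \<and> finite (alph A)
     \<and> init A \<noteq> {} \<and> init A \<subseteq> states A \<and> marked A \<subseteq> states A
     \<and> (\<forall>q\<in>states A. \<forall>e\<in>alph A. delta A q e \<subseteq> states A)"

fun delta_ext :: "('s, 'e) nfa \<Rightarrow> 's set \<Rightarrow> 'e list \<Rightarrow> 's set" where
  "delta_ext A S [] = S"
| "delta_ext A S (e # w) = delta_ext A (\<Union>q\<in>S. delta A q e) w"

definition lang_m :: "('s, 'e) nfa \<Rightarrow> 'e list set" where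
  "lang_m A = {w. set w \<subseteq> alph A \<and> delta_ext A (init A) w \<inter> marked A \<noteq> {}}"

definition par_comp :: "('s, 'e) nfa list \<Rightarrow> ('s list, 'e) nfa" where
  "par_comp As = \<lparr>
     states = {qs. length qs = length As \<and> (\<forall>i<length As. qs ! i \<in> states (As ! i))},
     alph = (\<Union>i<length As. alph (As ! i)),
     delta = (\<lambda>qs e. {qs'. length qs' = length As \<and>
                (\<forall>i<length As. if e \<in> alph (As ! i)
                               then qs' ! i \<in> delta (As ! i) (qs ! i) e
                               else qs' ! i = qs ! i)}),
     init = {qs. length qs = length As \<and> (\<forall>i<length As. qs ! i \<in> init (As ! i))},
     marked = {qs. length qs = length As \<and> (\<forall>i<length As. qs ! i \<in> marked (As ! i))} \<rparr>"

text \<open>Events are of type 'a + nat: the alphabet Sigma is embedded via Inl, and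
  Inr provides an unlimited supply of further events.  The projection onto Sigma
  erases all events not in Inl ` Sigma.\<close>
definition proj :: "'a set \<Rightarrow> ('a + nat) list \<Rightarrow> 'a list" where
  "proj \<Sigma> w = concat (map (\<lambda>e. case e of Inl a \<Rightarrow> (if a \<in> \<Sigma> then [a] else []) | Inr _ \<Rightarrow> []) w)"

end

theory Submission
  imports Defs
begin

text \<open>The automata form an n-digit binary counter. The i-th automaton is a digit whose
  states 0 and 1 are its values and whose state 2 means "overflowed, carry pending"; states
  3 to 5 are unreachable padding. Letters of \<open>\<Sigma>\<close> increment digit 0, and the private event
  \<open>Inr (i + 1)\<close> resets a pending digit i while incrementing digit i + 1. Weighting state 1 of
  digit i by \<open>2 ^ i\<close> and state 2 by \<open>2 ^ (i + 1)\<close>, every letter of \<open>\<Sigma>\<close> raises the total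
  weight by one and every carry preserves it, so an accepted run from 0...0 to 1...1 reads
  exactly \<open>2 ^ n - 1\<close> letters of \<open>\<Sigma>\<close>. Conversely, counting from 0...0 up to 1...1 (by
  induction on the number of digits) performs \<open>2 ^ n - 1\<close> increments, each of which may
  read an arbitrary letter of \<open>\<Sigma>\<close>.\<close>

lemma delta_ext_append: "delta_ext A S (u @ v) = delta_ext A (delta_ext A S u) v"
  by (induction u arbitrary: S) auto

lemma delta_ext_mono: "S \<subseteq> T \<Longrightarrow> delta_ext A S w \<subseteq> delta_ext A T w"
  by (induction w arbitrary: S T) (simp, (simp, blast intro: UN_mono))

lemma delta_ext_ConsI:
  "s' \<in> delta A s e \<Longrightarrow> t \<in> delta_ext A {s'} w \<Longrightarrow> t \<in> delta_ext A {s} (e # w)"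
  using delta_ext_mono[of "{s'}" "delta A s e" A w] by auto

lemma delta_ext_appendI:
  "t \<in> delta_ext A {s} u \<Longrightarrow> r \<in> delta_ext A {t} v \<Longrightarrow> r \<in> delta_ext A {s} (u @ v)"
  using delta_ext_mono[of "{t}" "delta_ext A {s} u" A v] by (auto simp: delta_ext_append)

lemma delta_ext_potential:
  assumes step: "\<And>s e s'. s' \<in> delta A s e \<Longrightarrow> V s' = V s + f e"
  shows "t \<in> delta_ext A S w \<Longrightarrow> (\<And>s. s \<in> S \<Longrightarrow> V s = c) \<Longrightarrow> V t = c + sum_list (map f w)"
proof (induction w arbitrary: S c)
  case Nil
  then show ?case by simp
next
  case (Cons e w)
  have "V t = (c + f e) + sum_list (map f w)"
    using Cons.prems by (intro Cons.IH[of "\<Union>s\<in>S. delta A s e"]) (auto simp: step)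
  then show ?case by (simp add: add.assoc)
qed

lemma proj_append: "proj S (u @ v) = proj S u @ proj S v"
  by (simp add: proj_def)

lemma length_proj: "length (proj S w) = sum_list (map (\<lambda>e. length (proj S [e])) w)"
  by (induction w) (simp_all add: proj_def)

lemma sum_cong_outside:
  assumes "finite A" "B \<subseteq> A" "\<And>i. i \<in> A - B \<Longrightarrow> f i = g i"
  shows "sum f A + sum g B = sum g A + sum f B"
  using assms sum.subset_diff[of B A f] sum.subset_diff[of B A g] sum.cong[of "A - B" "A - B" f g]
  by (simp add: ac_simps)

definition carry_in :: "'a set \<Rightarrow> nat \<Rightarrow> ('a + nat) set" where
  "carry_in S i = (if i = 0 then Inl ` S else {Inr i})"

definition digit :: "'a set \<Rightarrow> nat \<Rightarrow> nat \<Rightarrow> (nat, 'a + nat) nfa" where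
  "digit S n i = \<lparr>states = {0..<6}, alph = carry_in S i \<union> {Inr (Suc i)},
     delta = (\<lambda>q e. if e \<in> carry_in S i \<and> q < 2 then {Suc q}
                    else if e = Inr (Suc i) \<and> q = 2 \<and> Suc i < n then {0} else {}),
     init = {0}, marked = {1}\<rparr>"

definition counter :: "'a set \<Rightarrow> nat \<Rightarrow> (nat list, 'a + nat) nfa" where
  "counter S n = par_comp (map (digit S n) [0..<n])"

lemma alph_digit: "e \<in> alph (digit S n i) \<longleftrightarrow> e \<in> carry_in S i \<or> e = Inr (Suc i)"
  by (auto simp: digit_def)

lemma delta_digit:
  "delta (digit S n i) q e = (if e \<in> carry_in S i \<and> q < 2 then {Suc q}
     else if e = Inr (Suc i) \<and> q = 2 \<and> Suc i < n then {0} else {})"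
  by (simp add: digit_def)

lemma alph_counter: "e \<in> alph (counter S n) \<longleftrightarrow> (\<exists>i<n. e \<in> alph (digit S n i))"
  by (auto simp: counter_def par_comp_def)

lemma carry_in_subset_alph_counter: "i < n \<Longrightarrow> carry_in S i \<subseteq> alph (counter S n)"
  by (auto simp: alph_counter alph_digit)

lemma delta_counter:
  "s' \<in> delta (counter S n) s e \<longleftrightarrow> length s' = n \<and>
     (\<forall>i<n. if e \<in> alph (digit S n i) then s' ! i \<in> delta (digit S n i) (s ! i) e
            else s' ! i = s ! i)"
  by (simp add: counter_def par_comp_def)

lemma init_counter: "init (counter S n) = {replicate n 0}"
  by (auto simp: counter_def par_comp_def digit_def intro: nth_equalityI)

lemma marked_counter: "marked (counter S n) = {replicate n 1}"
  by (auto simp: counter_def par_comp_def digit_def intro: nth_equalityI)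

lemma counter_step_input:
  "a \<in> S \<Longrightarrow> q < 2 \<Longrightarrow> Suc (length r) = n \<Longrightarrow>
   Suc q # r \<in> delta (counter S n) (q # r) (Inl a)"
  by (auto simp: delta_counter alph_digit delta_digit carry_in_def nth_Cons split: nat.split)

lemma counter_step_carry:
  assumes "q < 2" and len: "length p + length r + 2 = n"
  shows "p @ 0 # Suc q # r \<in> delta (counter S n) (p @ 2 # q # r) (Inr (Suc (length p)))"
  unfolding delta_counter
proof (intro conjI allI impI)
  fix i assume "i < n"
  then consider "i = length p" | "i = Suc (length p)" | "i \<noteq> length p" "i \<noteq> Suc (length p)"
    by blast
  then show "if Inr (Suc (length p)) \<in> alph (digit S n i)
      then (p @ 0 # Suc q # r) ! i \<in> delta (digit S n i) ((p @ 2 # q # r) ! i) (Inr (Suc (length p)))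
      else (p @ 0 # Suc q # r) ! i = (p @ 2 # q # r) ! i"
    by cases (use assms in \<open>auto simp: alph_digit delta_digit carry_in_def nth_append nth_Cons
      split: nat.split\<close>)
qed (use len in simp)

lemma counter_carry_chain:
  "length p + m + length r + 2 = n \<Longrightarrow>
   p @ replicate (Suc m) 0 @ 1 # r
     \<in> delta_ext (counter S n) {p @ 2 # replicate m 1 @ 0 # r} (map Inr [Suc (length p)..<length p + m + 2])"
proof (induction m arbitrary: p)
  case 0
  then show ?case
    using counter_step_carry[of 0 p r n S] delta_ext_ConsI[of _ "counter S n" _ _ _ "[]"] by simp
next
  case (Suc m)
  have step: "(p @ [0]) @ 2 # replicate m 1 @ 0 # r
      \<in> delta (counter S n) (p @ 2 # replicate (Suc m) 1 @ 0 # r) (Inr (Suc (length p)))"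
    using counter_step_carry[of 1 p "replicate m 1 @ 0 # r" n S] Suc.prems by (simp add: numeral_2_eq_2)
  have "(p @ [0]) @ replicate (Suc m) 0 @ 1 # r \<in> delta_ext (counter S n)
      {(p @ [0]) @ 2 # replicate m 1 @ 0 # r} (map Inr [Suc (length (p @ [0]))..<length (p @ [0]) + m + 2])"
    using Suc.prems by (intro Suc.IH) simp
  moreover have "(p @ [0]) @ replicate (Suc m) 0 @ 1 # r = p @ replicate (Suc (Suc m)) 0 @ 1 # r"
    by (simp add: replicate_app_Cons_same)
  moreover have "[Suc (length p)..<length p + Suc m + 2]
      = Suc (length p) # [Suc (length (p @ [0]))..<length (p @ [0]) + m + 2]"
    by (simp add: upt_conv_Cons)
  ultimately show ?case
    using delta_ext_ConsI[OF step] by (simp only: list.map)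
qed

lemma counter_increment:
  assumes "a \<in> S" and len: "k + length r + 1 = n"
  shows "replicate k 0 @ 1 # r \<in> delta_ext (counter S n) {replicate k 1 @ 0 # r} (Inl a # map Inr [1..<Suc k])"
proof (cases k)
  case 0
  then show ?thesis
    using assms counter_step_input[of a S 0 r n] delta_ext_ConsI[of _ "counter S n" _ _ _ "[]"] by simp
next
  case (Suc m)
  have "2 # replicate m 1 @ 0 # r \<in> delta (counter S n) (1 # replicate m 1 @ 0 # r) (Inl a)"
    using assms Suc counter_step_input[of a S 1 "replicate m 1 @ 0 # r" n] by (simp add: numeral_2_eq_2)
  moreover have "replicate (Suc m) 0 @ 1 # r
      \<in> delta_ext (counter S n) {2 # replicate m 1 @ 0 # r} (map Inr [1..<m + 2])"
    using counter_carry_chain[of "[]" m r n S] len Suc by simp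
  ultimately show ?thesis
    using Suc delta_ext_ConsI by fastforce
qed

lemma increment_word_subset_alph_counter:
  assumes "a \<in> S" and "k < n"
  shows "set (Inl a # map Inr [1..<Suc k]) \<subseteq> alph (counter S n)"
proof
  fix e assume "e \<in> set (Inl a # map Inr [1..<Suc k])"
  then consider "e = Inl a" | j where "0 < j" "j \<le> k" "e = Inr j"
    by force
  then show "e \<in> alph (counter S n)"
  proof cases
    case 1
    then show ?thesis
      using assms carry_in_subset_alph_counter[of 0 n S] by (auto simp: carry_in_def)
  next
    case (2 j)
    then show ?thesis
      using assms carry_in_subset_alph_counter[of j n S] by (auto simp: carry_in_def)
  qed
qed

lemma counter_counts_up:
  assumes "k + length r = n" "set v \<subseteq> S" "length v = 2 ^ k - 1"
  shows "\<exists>u. proj S u = v \<and> set u \<subseteq> alph (counter S n)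
           \<and> replicate k 1 @ r \<in> delta_ext (counter S n) {replicate k 0 @ r} u"
  using assms
proof (induction k arbitrary: r v)
  case 0
  then show ?case by (intro exI[of _ "[]"]) (simp add: proj_def)
next
  case (Suc k)
  obtain h where h: "2 ^ k = Suc h"
    using not0_implies_Suc[of "2 ^ k"] by auto
  have len_v: "length v = Suc (2 * h)"
    using Suc.prems(3) h by simp
  then have v: "v = take h v @ v ! h # drop (Suc h) v"
    by (intro id_take_nth_drop) simp
  have halves: "length (take h v) = 2 ^ k - 1" "length (drop (Suc h) v) = 2 ^ k - 1"
    using len_v h by simp_all
  have a: "v ! h \<in> S"
    using Suc.prems(2) len_v by (simp add: subset_iff)
  obtain u1 where u1: "proj S u1 = take h v" "set u1 \<subseteq> alph (counter S n)"
    "replicate k 1 @ 0 # r \<in> delta_ext (counter S n) {replicate k 0 @ 0 # r} u1"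
    using Suc.IH[of "0 # r" "take h v"] Suc.prems halves by (auto dest: in_set_takeD)
  obtain u2 where u2: "proj S u2 = drop (Suc h) v" "set u2 \<subseteq> alph (counter S n)"
    "replicate k 1 @ 1 # r \<in> delta_ext (counter S n) {replicate k 0 @ 1 # r} u2"
    using Suc.IH[of "1 # r" "drop (Suc h) v"] Suc.prems halves by (auto dest: in_set_dropD)
  let ?c = "Inl (v ! h) # map Inr [1..<Suc k]"
  have c: "replicate k 0 @ 1 # r \<in> delta_ext (counter S n) {replicate k 1 @ 0 # r} ?c"
    using Suc.prems a by (intro counter_increment) auto
  have "set ?c \<subseteq> alph (counter S n)"
    using a Suc.prems(1) by (intro increment_word_subset_alph_counter) auto
  have "proj S ?c = [v ! h]"
    using a by (simp add: proj_def)
  then have "proj S (u1 @ ?c @ u2) = v"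
    unfolding proj_append u1(1) u2(1) using v[symmetric] by simp
  moreover have "replicate (Suc k) 1 @ r \<in> delta_ext (counter S n) {replicate (Suc k) 0 @ r} (u1 @ ?c @ u2)"
    using delta_ext_appendI[OF u1(3) delta_ext_appendI[OF c u2(3)]]
    by (simp add: replicate_app_Cons_same)
  ultimately show ?case
    using u1(2) u2(2) \<open>set ?c \<subseteq> alph (counter S n)\<close> by (intro exI[of _ "u1 @ ?c @ u2"]) simp
qed

definition digit_value :: "nat \<Rightarrow> nat \<Rightarrow> nat" where
  "digit_value i q = (if q = 1 then 2 ^ i else if q = 2 then 2 ^ Suc i else 0)"

definition counter_value :: "nat \<Rightarrow> nat list \<Rightarrow> nat" where
  "counter_value n s = (\<Sum>i<n. digit_value i (s ! i))"

lemma digit_value_Suc: "q < 2 \<Longrightarrow> digit_value i (Suc q) = digit_value i q + 2 ^ i"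
  by (auto simp: digit_value_def less_2_cases_iff)

definition active_digits :: "'a set \<Rightarrow> nat \<Rightarrow> 'a + nat \<Rightarrow> nat set" where
  "active_digits S n e = {i. i < n \<and> e \<in> alph (digit S n i)}"

lemma active_digits_value_step:
  assumes "0 < n" and step: "s' \<in> delta (counter S n) s e"
  shows "(\<Sum>i\<in>active_digits S n e. digit_value i (s' ! i))
       = (\<Sum>i\<in>active_digits S n e. digit_value i (s ! i)) + length (proj S [e])"
proof -
  let ?M = "active_digits S n e"
  have moved: "\<And>i. i \<in> ?M \<Longrightarrow> s' ! i \<in> delta (digit S n i) (s ! i) e"
    using step by (auto simp: active_digits_def delta_counter)
  show ?thesis
  proof (cases e)
    case (Inl a)
    show ?thesis
    proof (cases "a \<in> S")
      case True
      then have "?M = {0}"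
        using assms(1) Inl by (auto simp: active_digits_def alph_digit carry_in_def)
      moreover have "s ! 0 < 2" "s' ! 0 = Suc (s ! 0)"
        using moved[of 0] \<open>?M = {0}\<close> Inl True by (auto simp: delta_digit carry_in_def split: if_splits)
      ultimately show ?thesis
        using Inl True by (simp add: digit_value_Suc proj_def)
    next
      case False
      then have "?M = {}"
        using Inl by (auto simp: active_digits_def alph_digit carry_in_def)
      then show ?thesis
        using Inl False by (simp add: proj_def)
    qed
  next
    case (Inr j)
    show ?thesis
    proof (cases "0 < j \<and> j < n")
      case True
      then obtain k where k: "j = Suc k" "Suc k < n"
        using gr0_implies_Suc by blast
      then have "?M = {k, Suc k}"
        using Inr by (auto simp: active_digits_def alph_digit carry_in_def)
      moreover have "s ! k = 2" "s' ! k = 0" "s ! Suc k < 2" "s' ! Suc k = Suc (s ! Suc k)"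
        using moved[of k] moved[of "Suc k"] \<open>?M = {k, Suc k}\<close> Inr k
        by (auto simp: delta_digit carry_in_def split: if_splits)
      ultimately show ?thesis
        using Inr by (simp add: digit_value_Suc proj_def) (simp add: digit_value_def)
    next
      case False
      have "i \<notin> ?M" for i
        using moved[of i] False Inr
        by (auto simp: active_digits_def alph_digit delta_digit carry_in_def split: if_splits)
      then have "?M = {}"
        by blast
      then show ?thesis
        using Inr by (simp add: proj_def)
    qed
  qed
qed

lemma counter_value_step:
  assumes "0 < n" and step: "s' \<in> delta (counter S n) s e"
  shows "counter_value n s' = counter_value n s + length (proj S [e])"
proof -
  let ?M = "active_digits S n e"
  have "\<And>i. i \<in> {..<n} - ?M \<Longrightarrow> s' ! i = s ! i"
    using step by (auto simp: active_digits_def delta_counter)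
  then have "counter_value n s' + (\<Sum>i\<in>?M. digit_value i (s ! i))
      = counter_value n s + (\<Sum>i\<in>?M. digit_value i (s' ! i))"
    unfolding counter_value_def by (intro sum_cong_outside) (auto simp: active_digits_def)
  then show ?thesis
    using active_digits_value_step[OF assms] by simp
qed

lemma counter_value_all_ones: "counter_value n (replicate n 1) = 2 ^ n - 1"
  using mask_eq_sum_exp[of n, where 'a = nat] by (simp add: counter_value_def digit_value_def lessThan_def)

lemma proj_lang_counter:
  assumes "0 < n"
  shows "proj S ` lang_m (counter S n) = {v. set v \<subseteq> S \<and> length v = 2 ^ n - 1}"
proof (intro equalityI subsetI)
  fix v assume "v \<in> proj S ` lang_m (counter S n)"
  then obtain w where v: "v = proj S w"
    and run: "replicate n 1 \<in> delta_ext (counter S n) {replicate n 0} w"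
    by (auto simp: lang_m_def init_counter marked_counter)
  have "counter_value n (replicate n 1) = counter_value n (replicate n 0) + length v"
    using delta_ext_potential[where V = "counter_value n" and f = "\<lambda>e. length (proj S [e])",
        OF counter_value_step[OF assms] run]
    by (simp add: v length_proj[symmetric])
  moreover have "counter_value n (replicate n 0) = 0"
    by (simp add: counter_value_def digit_value_def)
  moreover have "set v \<subseteq> S"
    unfolding v proj_def by (auto split: sum.splits if_splits)
  ultimately show "v \<in> {v. set v \<subseteq> S \<and> length v = 2 ^ n - 1}"
    using counter_value_all_ones[of n] by simp
next
  fix v assume "v \<in> {v. set v \<subseteq> S \<and> length v = 2 ^ n - 1}"
  then obtain u where "proj S u = v" "set u \<subseteq> alph (counter S n)"
    "replicate n 1 \<in> delta_ext (counter S n) {replicate n 0} u"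
    using counter_counts_up[of n "[]" n v S] by auto
  then show "v \<in> proj S ` lang_m (counter S n)"
    by (auto simp: lang_m_def init_counter marked_counter)
qed

theorem lemma8:
  fixes \<Sigma> :: "'a set" and n :: nat
  assumes "finite \<Sigma>" and "\<Sigma> \<noteq> {}" and "n \<ge> 1"
  shows "\<exists>As :: (nat, 'a + nat) nfa list.
           length As = n
         \<and> (\<forall>A\<in>set As. wf_nfa A \<and> card (states A) = 6)
         \<and> proj \<Sigma> ` lang_m (par_comp As) = {w. set w \<subseteq> \<Sigma> \<and> length w = 2 ^ n - 1}"
proof (intro exI conjI)
  show "length (map (digit \<Sigma> n) [0..<n]) = n"
    by simp
  show "\<forall>A\<in>set (map (digit \<Sigma> n) [0..<n]). wf_nfa A \<and> card (states A) = 6"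
    using assms(1) by (auto simp: wf_nfa_def digit_def carry_in_def)
  show "proj \<Sigma> ` lang_m (par_comp (map (digit \<Sigma> n) [0..<n])) = {w. set w \<subseteq> \<Sigma> \<and> length w = 2 ^ n - 1}"
    using proj_lang_counter[of n \<Sigma>] assms(3) by (simp add: counter_def)
qed

end
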